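(* Let $m\ge 2$, $d\ge1$ be integers, $n=md$, $a,c>0$, $q=\frac{ad}{2c}+1$. Let $\Pi$ be the $n\times\binom m2$ matrix whose columns are the vectors $\sqrt{a/m}\,(e_{1+(i-1)d}-e_{1+(j-1)d})$, $1\le i<j\le m$; let $\Pi_R$ be the $m\times\binom m2$ submatrix of $\Pi$ formed by its rows $1+(k-1)d$, $k=1,\dots,m$; let $G_R$ be the $m\times m$ matrix with $(G_R)_{kl}=-\frac{d}{2cm}|k-l|(m-|k-l|)$; let $M_R=(G_R^{-1}+\Pi_R\Pi_R^\top)^{-1}$; and let $F=\Pi\Pi^\top-\Pi\Pi_R^\top M_R\Pi_R\Pi^\top$ ($n\times n$). Then for all $r,s\in\{1,\dots,m\}$, $F_{(r-1)d+1,\,(s-1)d+1}=f_{((s-r)\bmod m)+1}$, all other entries of $F$ are $0$, and $$f_i=a\,\delta_{i1}-\frac{a^2d}{2c}\,\frac{U_{i-2}(q)+U_{m-i}(q)}{T_m(q)-1},\qquad i=1,\dots,m.$$ That is, $F$ is the block Toeplitz (block circulant) matrix with block rows $(F_1,F_2,\dots,F_m)$, $(F_m,F_1,\dots,F_{m-1})$, …, where each $d\times d$ block $F_i$ has $(F_i)_{11}=f_i$ and all other entries zero.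
   Context: $e_j$ denotes the $j$-th standard basis vector of $\mathbb R^n$; $\delta_{i1}$ is the Kronecker delta. $T_k,U_k$ are the Chebyshev polynomials of the first and second kind ($T_0=1,T_1=x,U_0=1,U_1=2x$, recurrence $p_{k+1}=2xp_k-p_{k-1}$), with $U_{-1}=0$. *)

theory Defs
  imports Complex_Main "Jordan_Normal_Form.Gauss_Jordan_Elimination"
begin

fun cheb_T :: "nat \<Rightarrow> real \<Rightarrow> real" where
  "cheb_T 0 x = 1"
| "cheb_T (Suc 0) x = x"
| "cheb_T (Suc (Suc k)) x = 2 * x * cheb_T (Suc k) x - cheb_T k x"

fun cheb_U :: "nat \<Rightarrow> real \<Rightarrow> real" where
  "cheb_U 0 x = 1"
| "cheb_U (Suc 0) x = 2 * x"
| "cheb_U (Suc (Suc k)) x = 2 * x * cheb_U (Suc k) x - cheb_U k x"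

text \<open>U with integer index, with the convention U_{-1} = 0 (only index -1 is ever negative here).\<close>
definition cheb_U_int :: "int \<Rightarrow> real \<Rightarrow> real" where
  "cheb_U_int k x = (if k < 0 then 0 else cheb_U (nat k) x)"

text \<open>Enumeration of the pairs (i,j), 0 \<le> i < j < m (0-based version of 1 \<le> i < j \<le> m),
  giving the column order of Pi.\<close>
definition pairs_list :: "nat \<Rightarrow> (nat \<times> nat) list" where
  "pairs_list m = [(i, j). i \<leftarrow> [0..<m], j \<leftarrow> [Suc i..<m]]"

definition Pi_mat :: "nat \<Rightarrow> nat \<Rightarrow> real \<Rightarrow> real mat" where
  "Pi_mat m d a = mat (m * d) (m choose 2) (\<lambda>(r, p).
      (case pairs_list m ! p of (i, j) \<Rightarrow>
         sqrt (a / real m) * ((if r = i * d then 1 else 0) - (if r = j * d then 1 else 0))))"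

definition PiR_mat :: "nat \<Rightarrow> nat \<Rightarrow> real \<Rightarrow> real mat" where
  "PiR_mat m d a = mat m (m choose 2) (\<lambda>(k, p). Pi_mat m d a $$ (k * d, p))"

definition GR_mat :: "nat \<Rightarrow> nat \<Rightarrow> real \<Rightarrow> real mat" where
  "GR_mat m d c = mat m m (\<lambda>(k, l).
      - (real d / (2 * c * real m)) * \<bar>real k - real l\<bar> * (real m - \<bar>real k - real l\<bar>))"

definition minv :: "real mat \<Rightarrow> real mat" where
  "minv A = the (mat_inverse A)"

definition MR_mat :: "nat \<Rightarrow> nat \<Rightarrow> real \<Rightarrow> real \<Rightarrow> real mat" where
  "MR_mat m d a c = minv (minv (GR_mat m d c) + PiR_mat m d a * transpose_mat (PiR_mat m d a))"

definition F_mat :: "nat \<Rightarrow> nat \<Rightarrow> real \<Rightarrow> real \<Rightarrow> real mat" where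
  "F_mat m d a c =
     (let P = Pi_mat m d a; PR = PiR_mat m d a in
      P * transpose_mat P - P * transpose_mat PR * MR_mat m d a c * PR * transpose_mat P)"

end

theory Submission
  imports Defs "Jordan_Normal_Form.Determinant"
begin

text \<open>
All m x m matrices involved are circulant. Since Pi = E Pi_R, where E embeds R^m into R^n along
the rows 1 + (k-1)d, we get F = E X E^T with X = P - P M_R P and P = Pi_R Pi_R^T = a I - (a/m) J,
J the all-ones matrix. The symbol t(m-t) of G_R has constant cyclic second difference, so
G_R^-1 = (c/d) L + beta' J with L = 2I - S - S^-1 the Laplacian of the m-cycle (S the cyclic shift).
Hence M_R^-1 = (c/d)(2q I - S - S^-1) + beta J, and by the Chebyshev recurrence (2q I - S - S^-1)^-1
is the circulant W with symbol (U_(t-1)(q) + U_(m-1-t)(q)) / (2 (T_m(q) - 1)).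
All multiples of J cancel in X, which leaves X = a I - (a^2 d/c) W.
\<close>

lemma minv_eqI:
  assumes A: "A \<in> carrier_mat n n" and B: "B \<in> carrier_mat n n" and BA: "B * A = 1\<^sub>m n"
  shows "minv A = B"
proof (cases "mat_inverse A")
  case None
  have "A * B = 1\<^sub>m n"
    by (rule mat_mult_left_right_inverse[OF B A BA])
  then have "A \<in> Units (ring_mat TYPE(real) n undefined)"
    using A B BA unfolding Units_def ring_mat_def by auto
  moreover have "A \<notin> Units (ring_mat TYPE(real) n undefined)"
    by (rule mat_inverse(1)[OF A None])
  ultimately show ?thesis
    by contradiction
next
  case (Some C)
  then have AC: "A * C = 1\<^sub>m n" and C: "C \<in> carrier_mat n n"
    using mat_inverse(2)[OF A] by auto
  have "B = B * (A * C)"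
    using B AC by simp
  also have "\<dots> = C"
    using A B C BA by (simp add: assoc_mult_mat[OF B A C, symmetric])
  finally show ?thesis
    by (simp add: minv_def Some)
qed

lemma lin_comb_mult_lin_comb:
  fixes A B C D :: "'a::comm_ring_1 mat"
  assumes "A \<in> carrier_mat n n" "B \<in> carrier_mat n n" "C \<in> carrier_mat n n" "D \<in> carrier_mat n n"
  shows "(x \<cdot>\<^sub>m A + y \<cdot>\<^sub>m B) * (u \<cdot>\<^sub>m C + v \<cdot>\<^sub>m D)
    = (x * u) \<cdot>\<^sub>m (A * C) + (x * v) \<cdot>\<^sub>m (A * D) + (y * u) \<cdot>\<^sub>m (B * C) + (y * v) \<cdot>\<^sub>m (B * D)"
  using assms
  by (intro eq_matI) (auto simp: scalar_prod_def sum.distrib sum_distrib_left algebra_simps)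

lemma mult_transpose_sandwich:
  fixes E R M :: "'a::comm_ring_1 mat"
  assumes E: "E \<in> carrier_mat n m" and R: "R \<in> carrier_mat m N" and M: "M \<in> carrier_mat m m"
  shows "(E * R) * transpose_mat (E * R) - (E * R) * transpose_mat R * M * R * transpose_mat (E * R)
      = E * (R * transpose_mat R - R * transpose_mat R * M * (R * transpose_mat R)) * transpose_mat E"
proof -
  let ?Rt = "transpose_mat R" and ?Et = "transpose_mat E"
  have Rt: "?Rt \<in> carrier_mat N m" and Et: "?Et \<in> carrier_mat m n"
    using E R by simp_all
  have RRt: "R * ?Rt \<in> carrier_mat m m"
    using R Rt by simp
  have B: "R * ?Rt * M * (R * ?Rt) \<in> carrier_mat m m"
    using RRt M by simp
  have "(E * R) * transpose_mat (E * R) = E * (R * (?Rt * ?Et))"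
    using E R Rt Et by (simp add: transpose_mult assoc_mult_mat[OF E R mult_carrier_mat[OF Rt Et]])
  also have "\<dots> = E * (R * ?Rt) * ?Et"
    using E R Rt Et RRt by (simp add: assoc_mult_mat[OF R Rt Et] assoc_mult_mat[OF E RRt Et])
  finally have "(E * R) * transpose_mat (E * R) = E * (R * ?Rt) * ?Et" .
  moreover have "(E * R) * ?Rt * M * R * transpose_mat (E * R) = E * (R * ?Rt * M * (R * ?Rt)) * ?Et"
  proof -
    have A: "R * ?Rt * M \<in> carrier_mat m m"
      by (rule mult_carrier_mat[OF RRt M])
    have C: "R * ?Rt * M * R \<in> carrier_mat m N"
      by (rule mult_carrier_mat[OF A R])
    have "(E * R) * ?Rt * M * R * transpose_mat (E * R) = E * (R * ?Rt) * M * R * (?Rt * ?Et)"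
      using E R by (simp add: transpose_mult assoc_mult_mat[OF E R Rt])
    also have "\<dots> = E * (R * ?Rt * M * R * (?Rt * ?Et))"
      by (simp add: assoc_mult_mat[OF E RRt M] assoc_mult_mat[OF E A R]
          assoc_mult_mat[OF E C mult_carrier_mat[OF Rt Et]])
    also have "\<dots> = E * (R * ?Rt * M * (R * ?Rt)) * ?Et"
      by (simp add: assoc_mult_mat[OF C Rt Et, symmetric] assoc_mult_mat[OF A R Rt]
          assoc_mult_mat[OF E B Et])
    finally show ?thesis .
  qed
  moreover have "E * (R * ?Rt - R * ?Rt * M * (R * ?Rt)) * ?Et
      = E * (R * ?Rt) * ?Et - E * (R * ?Rt * M * (R * ?Rt)) * ?Et"
    using E Et RRt B by (simp add: mult_minus_distrib_mat minus_mult_distrib_mat[of _ n m])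
  ultimately show ?thesis
    by simp
qed

section \<open>Circulant matrices\<close>

definition circulant :: "nat \<Rightarrow> (int \<Rightarrow> real) \<Rightarrow> real mat" where
  "circulant m g = mat m m (\<lambda>(k, l). g ((int l - int k) mod int m))"

lemma circulant_carrier [simp]: "circulant m g \<in> carrier_mat m m"
  and dim_circulant [simp]: "dim_row (circulant m g) = m" "dim_col (circulant m g) = m"
  and index_circulant [simp]:
    "k < m \<Longrightarrow> l < m \<Longrightarrow> circulant m g $$ (k, l) = g ((int l - int k) mod int m)"
  by (simp_all add: circulant_def)

lemma circulant_cong:
  "(\<And>t. 0 \<le> t \<Longrightarrow> t < int m \<Longrightarrow> g t = h t) \<Longrightarrow> circulant m g = circulant m h"
  by (rule eq_matI) simp_all

lemma sum_mod_reflect: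
  "(\<Sum>u\<in>{0..<int m}. f ((t - u) mod int m)) = (\<Sum>u\<in>{0..<int m}. f u)"
  by (rule sum.reindex_bij_witness[where i = "\<lambda>u. (t - u) mod int m" and j = "\<lambda>u. (t - u) mod int m"])
     (auto simp: mod_diff_right_eq)

lemma circulant_mult:
  "circulant m g * circulant m h
     = circulant m (\<lambda>t. \<Sum>u\<in>{0..<int m}. g u * h ((t - u) mod int m))"
proof (rule eq_matI)
  fix k l assume "k < dim_row (circulant m (\<lambda>t. \<Sum>u\<in>{0..<int m}. g u * h ((t - u) mod int m)))"
    and "l < dim_col (circulant m (\<lambda>t. \<Sum>u\<in>{0..<int m}. g u * h ((t - u) mod int m)))"
  then have k: "k < m" and l: "l < m" by simp_all
  have "(circulant m g * circulant m h) $$ (k, l)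
      = (\<Sum>i<m. g ((int i - int k) mod int m) * h ((int l - int i) mod int m))"
    using k l by (simp add: scalar_prod_def lessThan_atLeast0)
  also have "\<dots> = (\<Sum>u\<in>{0..<int m}. g u * h (((int l - int k) mod int m - u) mod int m))"
    by (rule sum.reindex_bij_witness[where i = "\<lambda>u. nat ((int k + u) mod int m)"
          and j = "\<lambda>i. (int i - int k) mod int m"])
       (use k in \<open>auto simp: mod_diff_left_eq mod_diff_right_eq diff_diff_eq mod_add_right_eq nat_less_iff\<close>)
  finally show "(circulant m g * circulant m h) $$ (k, l)
      = circulant m (\<lambda>t. \<Sum>u\<in>{0..<int m}. g u * h ((t - u) mod int m)) $$ (k, l)"
    using k l by simp
qed simp_all

lemma one_mat_eq_circulant: "1\<^sub>m m = circulant m (\<lambda>t. of_bool (t = 0))"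
proof (rule eq_matI)
  fix k l assume "k < dim_row (circulant m (\<lambda>t. of_bool (t = 0)))"
    and "l < dim_col (circulant m (\<lambda>t. of_bool (t = 0)))"
  then have "k < m" "l < m" by simp_all
  moreover have "(int l - int k) mod int m = 0 \<longleftrightarrow> k = l"
  proof -
    have "\<bar>int l - int k\<bar> < int m"
      using calculation by auto
    then show ?thesis
      using dvd_imp_le_int[of "int l - int k" "int m"] by (auto simp: mod_eq_0_iff_dvd)
  qed
  ultimately show "1\<^sub>m m $$ (k, l) = circulant m (\<lambda>t. of_bool (t = 0)) $$ (k, l)"
    by simp
qed simp_all

lemma smult_circulant: "x \<cdot>\<^sub>m circulant m g = circulant m (\<lambda>t. x * g t)"
  and plus_circulant: "circulant m g + circulant m h = circulant m (\<lambda>t. g t + h t)"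
  and minus_circulant: "circulant m g - circulant m h = circulant m (\<lambda>t. g t - h t)"
  by (rule eq_matI; simp)+

lemmas circulant_lin_comb = one_mat_eq_circulant smult_circulant plus_circulant minus_circulant

lemma circulant_mult_ones:
  "circulant m g * circulant m (\<lambda>_. 1) = (\<Sum>u\<in>{0..<int m}. g u) \<cdot>\<^sub>m circulant m (\<lambda>_. 1)"
  by (simp add: circulant_mult smult_circulant)

lemma ones_mult_circulant:
  "circulant m (\<lambda>_. 1) * circulant m h = (\<Sum>u\<in>{0..<int m}. h u) \<cdot>\<^sub>m circulant m (\<lambda>_. 1)"
  by (simp add: circulant_mult smult_circulant sum_mod_reflect[where f = h])

lemma ones_mult_ones: "circulant m (\<lambda>_. 1) * circulant m (\<lambda>_. 1) = real m \<cdot>\<^sub>m circulant m (\<lambda>_. 1)"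
  by (simp add: circulant_mult_ones)

lemma mod_pred_succ:
  assumes "0 \<le> t" and "t < int m"
  shows "(t - 1) mod int m = (if t = 0 then int m - 1 else t - 1)"
    and "(t + 1) mod int m = (if t + 1 = int m then 0 else t + 1)"
proof -
  have "(-1) mod int m = (int m - 1) mod int m"
    using mod_add_self2[of "-1" "int m"] by simp
  also have "\<dots> = int m - 1"
    using assms by (intro mod_pos_pos_trivial) simp_all
  finally have "(0 - 1) mod int m = int m - 1"
    by simp
  moreover have "t \<noteq> 0 \<Longrightarrow> (t - 1) mod int m = t - 1"
    using assms by (intro mod_pos_pos_trivial) simp_all
  ultimately show "(t - 1) mod int m = (if t = 0 then int m - 1 else t - 1)"
    by auto
  have "t + 1 \<noteq> int m \<Longrightarrow> (t + 1) mod int m = t + 1"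
    using assms by (intro mod_pos_pos_trivial) simp_all
  then show "(t + 1) mod int m = (if t + 1 = int m then 0 else t + 1)"
    by auto
qed

text \<open>x I - S - S^-1 for the cyclic shift S; for x = 2 the Laplacian of the m-cycle.\<close>

definition cyclic_laplacian :: "nat \<Rightarrow> real \<Rightarrow> real mat" where
  "cyclic_laplacian m x = circulant m (\<lambda>u. (if u = 0 then x else 0)
     - (if u = 1 mod int m then 1 else 0) - (if u = -1 mod int m then 1 else 0))"

lemma cyclic_laplacian_carrier [simp]: "cyclic_laplacian m x \<in> carrier_mat m m"
  by (simp add: cyclic_laplacian_def)

lemma cyclic_laplacian_mult_circulant:
  "cyclic_laplacian m x * circulant m g
     = circulant m (\<lambda>t. x * g t - g ((t - 1) mod int m) - g ((t + 1) mod int m))"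
  unfolding cyclic_laplacian_def circulant_mult
proof (rule circulant_cong)
  fix t assume t: "0 \<le> t" "t < int m"
  let ?S = "{0..<int m}" and ?g = "\<lambda>u. g ((t - u) mod int m)"
  have "(\<Sum>u\<in>?S. ((if u = 0 then x else 0) - (if u = 1 mod int m then 1 else 0)
        - (if u = -1 mod int m then 1 else 0)) * ?g u)
      = (\<Sum>u\<in>?S. if u = 0 then x * ?g u else 0) - (\<Sum>u\<in>?S. if u = 1 mod int m then ?g u else 0)
        - (\<Sum>u\<in>?S. if u = -1 mod int m then ?g u else 0)"
    by (simp add: left_diff_distrib sum_subtractf if_distrib[of "\<lambda>c. c * _"] cong: if_cong)
  also have "\<dots> = x * ?g 0 - ?g (1 mod int m) - ?g (-1 mod int m)"
    using t by (simp add: sum.delta)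
  also have "\<dots> = x * g t - g ((t - 1) mod int m) - g ((t + 1) mod int m)"
    using t by (simp add: mod_diff_right_eq)
  finally show "(\<Sum>u\<in>?S. ((if u = 0 then x else 0) - (if u = 1 mod int m then 1 else 0)
        - (if u = -1 mod int m then 1 else 0)) * ?g u)
      = x * g t - g ((t - 1) mod int m) - g ((t + 1) mod int m)" .
qed

lemma cyclic_laplacian_sum:
  assumes "m > 0"
  shows "(\<Sum>u\<in>{0..<int m}. (if u = 0 then x :: real else 0) - (if u = 1 mod int m then 1 else 0)
      - (if u = -1 mod int m then 1 else 0)) = x - 2"
  using assms by (simp add: sum_subtractf sum.delta)

lemma cyclic_laplacian_mult_ones:
  "m > 0 \<Longrightarrow> cyclic_laplacian m x * circulant m (\<lambda>_. 1) = (x - 2) \<cdot>\<^sub>m circulant m (\<lambda>_. 1)"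
  by (simp add: cyclic_laplacian_def circulant_mult_ones cyclic_laplacian_sum)

lemma ones_mult_cyclic_laplacian:
  "m > 0 \<Longrightarrow> circulant m (\<lambda>_. 1) * cyclic_laplacian m x = (x - 2) \<cdot>\<^sub>m circulant m (\<lambda>_. 1)"
  by (simp add: cyclic_laplacian_def ones_mult_circulant cyclic_laplacian_sum)

section \<open>Chebyshev polynomials\<close>

lemma cheb_T_gt_1:
  assumes "q > 1" and "k \<ge> 1"
  shows "cheb_T k q > 1"
proof -
  have "cheb_T k q \<ge> 1 \<and> cheb_T (Suc k) q > cheb_T k q" for k
  proof (induction k)
    case (Suc k)
    have "cheb_T (Suc (Suc k)) q - cheb_T (Suc k) q
        = (2 * q - 2) * cheb_T (Suc k) q + (cheb_T (Suc k) q - cheb_T k q)"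
      by (simp add: algebra_simps)
    moreover have "(2 * q - 2) * cheb_T (Suc k) q > 0"
      using Suc \<open>q > 1\<close> by simp
    ultimately show ?case using Suc by linarith
  qed (use \<open>q > 1\<close> in simp)
  from this[of "k - 1"] show ?thesis
    using \<open>k \<ge> 1\<close> by simp
qed

lemma cheb_U_Suc_Suc_diff: "cheb_U (Suc (Suc k)) x - cheb_U k x = 2 * cheb_T (Suc (Suc k)) x"
proof (induction k rule: induct_nat_012)
  case (ge2 n)
  have "cheb_U (Suc (Suc (Suc (Suc n)))) x - cheb_U (Suc (Suc n)) x
      = 2 * x * (cheb_U (Suc (Suc (Suc n))) x - cheb_U (Suc n) x) - (cheb_U (Suc (Suc n)) x - cheb_U n x)"
    by (simp only: cheb_U.simps) (simp add: algebra_simps)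
  also have "\<dots> = 2 * cheb_T (Suc (Suc (Suc (Suc n)))) x"
    by (simp only: ge2 cheb_T.simps(3)[of "Suc (Suc n)"]) (simp add: algebra_simps)
  finally show ?case .
qed (simp_all add: algebra_simps)

lemma cheb_U_int_rec:
  assumes "k \<ge> 0"
  shows "cheb_U_int (k + 1) x = 2 * x * cheb_U_int k x - cheb_U_int (k - 1) x"
proof -
  obtain n where "k = int n"
    using \<open>k \<ge> 0\<close> nonneg_int_cases by blast
  then show ?thesis
    by (cases n) (auto simp: cheb_U_int_def nat_add_distrib)
qed

definition cheb_wave :: "nat \<Rightarrow> real \<Rightarrow> int \<Rightarrow> real" where
  "cheb_wave m q t = cheb_U_int (t - 1) q + cheb_U_int (int m - 1 - t) q"

lemma cheb_wave_cyclic_second_diff: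
  assumes "m \<ge> 2" and "0 \<le> t" and "t < int m"
  shows "2 * q * cheb_wave m q t - cheb_wave m q ((t - 1) mod int m) - cheb_wave m q ((t + 1) mod int m)
      = (if t = 0 then 2 * (cheb_T m q - 1) else 0)"
proof (cases "t = 0")
  case True
  obtain j where j: "m = Suc (Suc j)"
    using \<open>m \<ge> 2\<close> by (metis add_2_eq_Suc le_Suc_ex)
  have "nat (int j + 1) = Suc j" by simp
  then show ?thesis
    unfolding mod_pred_succ[OF assms(2,3)]
    using True j cheb_U_Suc_Suc_diff[of j q] by (simp add: cheb_wave_def cheb_U_int_def algebra_simps)
next
  case False
  \<comment> \<open>cheb_wave takes the same value at 0 and m, so wrapping around at t = m - 1 is harmless\<close>
  have "cheb_wave m q ((t + 1) mod int m) = cheb_wave m q (t + 1)"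
    unfolding mod_pred_succ[OF assms(2,3)] by (cases "int m = t + 1") (auto simp: cheb_wave_def)
  moreover have "cheb_U_int t q = 2 * q * cheb_U_int (t - 1) q - cheb_U_int (t - 2) q"
    using cheb_U_int_rec[of "t - 1" q] assms False by simp
  moreover have "cheb_U_int (int m - t) q
      = 2 * q * cheb_U_int (int m - 1 - t) q - cheb_U_int (int m - 2 - t) q"
    using cheb_U_int_rec[of "int m - 1 - t" q] assms by (simp add: algebra_simps)
  ultimately show ?thesis
    unfolding mod_pred_succ[OF assms(2,3)] using False by (simp add: cheb_wave_def algebra_simps)
qed

section \<open>The matrices G_R, Pi_R and Pi\<close>

lemma parabola_cyclic_second_diff:
  assumes "0 \<le> t" and "t < int m"
  shows "2 * (t * (int m - t)) - (t - 1) mod int m * (int m - (t - 1) mod int m)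
      - (t + 1) mod int m * (int m - (t + 1) mod int m) = (if t = 0 then 2 - 2 * int m else 2)"
proof -
  consider "t = 0" | "0 < t" "t + 1 < int m" | "0 < t" "int m = t + 1"
    using assms by linarith
  then show ?thesis
    unfolding mod_pred_succ[OF assms] by cases (auto simp: algebra_simps)
qed

lemma GR_mat_eq_circulant:
  "GR_mat m d c = circulant m (\<lambda>t. - (real d / (2 * c * real m)) * of_int (t * (int m - t)))"
proof (rule eq_matI)
  fix k l assume "k < dim_row (circulant m (\<lambda>t. - (real d / (2 * c * real m)) * of_int (t * (int m - t))))"
    and "l < dim_col (circulant m (\<lambda>t. - (real d / (2 * c * real m)) * of_int (t * (int m - t))))"
  then have k: "k < m" and l: "l < m" by simp_all
  have diff_mod: "(int l - int k) mod int m = (if k \<le> l then int l - int k else int l - int k + int m)"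
  proof (cases "k \<le> l")
    case False
    have "(int l - int k) mod int m = (int l - int k + int m) mod int m" by simp
    also have "\<dots> = int l - int k + int m"
      using False k by (intro mod_pos_pos_trivial) simp_all
    finally show ?thesis using False by simp
  qed (use l in \<open>simp add: mod_pos_pos_trivial\<close>)
  have "real_of_int ((int l - int k) mod int m * (int m - (int l - int k) mod int m))
      = \<bar>real k - real l\<bar> * (real m - \<bar>real k - real l\<bar>)"
    unfolding diff_mod by (cases "k \<le> l") (simp_all add: algebra_simps)
  then show "GR_mat m d c $$ (k, l)
      = circulant m (\<lambda>t. - (real d / (2 * c * real m)) * of_int (t * (int m - t))) $$ (k, l)"
    using k l by (simp add: GR_mat_def)
qed (simp_all add: GR_mat_def)

lemma GR_mat_carrier [simp]: "GR_mat m d c \<in> carrier_mat m m"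
  by (simp add: GR_mat_eq_circulant)

lemma sum_upper_pairs_symmetric:
  fixes f :: "nat \<Rightarrow> nat \<Rightarrow> 'a::comm_semiring_1"
  assumes "\<And>i j. f i j = f j i" and "\<And>i. f i i = 0"
  shows "(\<Sum>i<m. \<Sum>j<m. f i j) = 2 * (\<Sum>i<m. \<Sum>j\<in>{i<..<m}. f i j)"
proof (induction m)
  case (Suc m)
  have "{m<..<Suc m} = {}"
    by auto
  then have "(\<Sum>i<Suc m. \<Sum>j\<in>{i<..<Suc m}. f i j) = (\<Sum>i<m. \<Sum>j\<in>{i<..<Suc m}. f i j)"
    by simp
  also have "\<dots> = (\<Sum>i<m. f i m + (\<Sum>j\<in>{i<..<m}. f i j))"
  proof (rule sum.cong)
    fix i assume "i \<in> {..<m}"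
    then have "{i<..<Suc m} = insert m {i<..<m}" by auto
    then show "(\<Sum>j\<in>{i<..<Suc m}. f i j) = f i m + (\<Sum>j\<in>{i<..<m}. f i j)" by simp
  qed simp
  also have "\<dots> = (\<Sum>i<m. f i m) + (\<Sum>i<m. \<Sum>j\<in>{i<..<m}. f i j)"
    by (rule sum.distrib)
  finally have upper: "(\<Sum>i<Suc m. \<Sum>j\<in>{i<..<Suc m}. f i j)
      = (\<Sum>i<m. f i m) + (\<Sum>i<m. \<Sum>j\<in>{i<..<m}. f i j)" .
  have "(\<Sum>i<Suc m. \<Sum>j<Suc m. f i j)
      = (\<Sum>i<m. \<Sum>j<m. f i j) + (\<Sum>i<m. f i m) + ((\<Sum>j<m. f m j) + f m m)"
    by (simp add: sum.distrib add_ac)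
  also have "\<dots> = 2 * ((\<Sum>i<m. f i m) + (\<Sum>i<m. \<Sum>j\<in>{i<..<m}. f i j))"
    using Suc assms by (simp add: mult_2 algebra_simps)
  finally show ?case
    unfolding upper .
qed simp

lemma sum_list_concat: "sum_list (concat xss) = sum_list (map sum_list xss)"
  by (induction xss) simp_all

lemma sum_pairs_list:
  "(\<Sum>p<length (pairs_list m). f (pairs_list m ! p)) = (\<Sum>i<m. \<Sum>j\<in>{i<..<m}. f (i, j))"
proof -
  have "(\<Sum>p<length xs. f (xs ! p)) = sum_list (map f xs)" for xs :: "(nat \<times> nat) list"
    by (simp add: sum_list_sum_nth lessThan_atLeast0)
  moreover have "{Suc i..<m} = {i<..<m}" for i
    by auto
  ultimately show ?thesis
    by (simp add: pairs_list_def sum_list_concat map_concat o_def lessThan_atLeast0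
        sum_set_upt_conv_sum_list_nat[symmetric])
qed

lemma length_pairs_list: "length (pairs_list m) = m choose 2"
proof -
  have "2 * length (pairs_list m) = 2 * (\<Sum>i<m. \<Sum>j\<in>{i<..<m}. of_bool (i \<noteq> j))"
    using sum_pairs_list[of "\<lambda>_. 1 :: nat" m] by simp
  also have "\<dots> = (\<Sum>i<m. \<Sum>j<m. of_bool (i \<noteq> j))"
    by (rule sum_upper_pairs_symmetric[symmetric]) auto
  also have "\<dots> = (\<Sum>i<m. m - 1)"
  proof (rule sum.cong)
    fix i assume "i \<in> {..<m}"
    moreover have "{..<m} \<inter> {j. i \<noteq> j} = {..<m} - {i}"
      by auto
    ultimately show "(\<Sum>j<m. of_bool (i \<noteq> j)) = m - 1"
      by simp
  qed simp
  also have "\<dots> = m * (m - 1)"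
    by simp
  finally show ?thesis
    by (simp add: choose_two)
qed

lemma sum_pair_differences:
  fixes x y :: "nat \<Rightarrow> 'a::comm_ring_1"
  shows "(\<Sum>i<m. \<Sum>j<m. (x i - x j) * (y i - y j))
      = 2 * (of_nat m * (\<Sum>i<m. x i * y i) - (\<Sum>i<m. x i) * (\<Sum>i<m. y i))"
  by (simp add: algebra_simps sum.distrib sum_subtractf sum_distrib_left sum_distrib_right
      sum.swap[of "\<lambda>i j. x j * y i"])

lemma PiR_mat_carrier [simp]: "PiR_mat m d a \<in> carrier_mat m (m choose 2)"
  by (simp add: PiR_mat_def)

lemma PiR_mat_index:
  assumes "d > 0" and "k < m" and "p < m choose 2"
  shows "PiR_mat m d a $$ (k, p) = sqrt (a / real m)
      * (of_bool (k = fst (pairs_list m ! p)) - of_bool (k = snd (pairs_list m ! p)))"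
  using assms by (simp add: PiR_mat_def Pi_mat_def split: prod.split)

lemma PiR_mult_transpose:
  assumes "d > 0" and "a \<ge> 0"
  shows "PiR_mat m d a * transpose_mat (PiR_mat m d a)
      = a \<cdot>\<^sub>m 1\<^sub>m m + (- a / real m) \<cdot>\<^sub>m circulant m (\<lambda>_. 1)"
proof (rule eq_matI)
  fix k l assume "k < dim_row (a \<cdot>\<^sub>m 1\<^sub>m m + (- a / real m) \<cdot>\<^sub>m circulant m (\<lambda>_. 1))"
    and "l < dim_col (a \<cdot>\<^sub>m 1\<^sub>m m + (- a / real m) \<cdot>\<^sub>m circulant m (\<lambda>_. 1))"
  then have k: "k < m" and l: "l < m" by simp_all
  define \<phi> where "\<phi> i j = (of_bool (k = i) - of_bool (k = j)) * (of_bool (l = i) - of_bool (l = j) :: real)"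
    for i j
  have "(PiR_mat m d a * transpose_mat (PiR_mat m d a)) $$ (k, l)
      = (\<Sum>p<length (pairs_list m). a / real m * \<phi> (fst (pairs_list m ! p)) (snd (pairs_list m ! p)))"
  proof -
    have "(PiR_mat m d a * transpose_mat (PiR_mat m d a)) $$ (k, l)
        = (\<Sum>p<m choose 2. PiR_mat m d a $$ (k, p) * PiR_mat m d a $$ (l, p))"
      using k l by (simp add: scalar_prod_def lessThan_atLeast0 PiR_mat_def)
    moreover have "sqrt (a / real m) * (sqrt (a / real m) * y) = a / real m * y" for y
      using assms by (simp flip: mult.assoc)
    ultimately show ?thesis
      using k l assms by (simp add: length_pairs_list PiR_mat_index \<phi>_def mult_ac)
  qed
  also have "\<dots> = (\<Sum>i<m. \<Sum>j\<in>{i<..<m}. a / real m * \<phi> i j)"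
    using sum_pairs_list[of "\<lambda>q. a / real m * \<phi> (fst q) (snd q)" m] by simp
  also have "\<dots> = a / real m * (\<Sum>i<m. \<Sum>j\<in>{i<..<m}. \<phi> i j)"
    by (simp add: sum_distrib_left)
  also have "\<dots> = a / real m * ((\<Sum>i<m. \<Sum>j<m. \<phi> i j) / 2)"
    by (subst sum_upper_pairs_symmetric) (auto simp: \<phi>_def)
  also have "\<dots> = a / real m * (real m * of_bool (k = l) - 1)"
    unfolding \<phi>_def sum_pair_differences using k l by (simp add: field_simps)
  also have "\<dots> = (a \<cdot>\<^sub>m 1\<^sub>m m + (- a / real m) \<cdot>\<^sub>m circulant m (\<lambda>_. 1)) $$ (k, l)"
    using k l by (simp add: algebra_simps)
  finally show "(PiR_mat m d a * transpose_mat (PiR_mat m d a)) $$ (k, l)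
      = (a \<cdot>\<^sub>m 1\<^sub>m m + (- a / real m) \<cdot>\<^sub>m circulant m (\<lambda>_. 1)) $$ (k, l)" .
qed (simp_all add: PiR_mat_def)

definition row_embedding :: "nat \<Rightarrow> nat \<Rightarrow> real mat" where
  "row_embedding m d = mat (m * d) m (\<lambda>(x, k). of_bool (x = k * d))"

lemma row_embedding_carrier [simp]: "row_embedding m d \<in> carrier_mat (m * d) m"
  by (simp add: row_embedding_def)

lemma sum_of_bool_eq_mult:
  fixes f :: "nat \<Rightarrow> real"
  assumes "d > 0" and "x < m * d"
  shows "(\<Sum>k<m. of_bool (x = k * d) * f k) = (if d dvd x then f (x div d) else 0)"
proof -
  have "x = k * d \<longleftrightarrow> d dvd x \<and> k = x div d" for k
    using \<open>d > 0\<close> by auto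
  then have "(\<Sum>k<m. of_bool (x = k * d) * f k) = (\<Sum>k<m. if k = x div d then of_bool (d dvd x) * f k else 0)"
    by (intro sum.cong) auto
  also have "\<dots> = (if d dvd x then f (x div d) else 0)"
    using assms by (simp add: less_mult_imp_div_less)
  finally show ?thesis .
qed

lemma row_embedding_mult_index:
  assumes "d > 0" and "A \<in> carrier_mat m nc" and "x < m * d" and "j < nc"
  shows "(row_embedding m d * A) $$ (x, j) = (if d dvd x then A $$ (x div d, j) else 0)"
  using assms sum_of_bool_eq_mult[of d x m "\<lambda>k. A $$ (k, j)"]
  by (simp add: row_embedding_def scalar_prod_def lessThan_atLeast0)

lemma mult_transpose_row_embedding_index:
  assumes "d > 0" and "A \<in> carrier_mat nr m" and "i < nr" and "y < m * d"
  shows "(A * transpose_mat (row_embedding m d)) $$ (i, y) = (if d dvd y then A $$ (i, y div d) else 0)"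
  using assms sum_of_bool_eq_mult[of d y m "\<lambda>k. A $$ (i, k)"]
  by (simp add: row_embedding_def scalar_prod_def lessThan_atLeast0 mult.commute)

lemma Pi_mat_eq_row_embedding_mult:
  assumes "d > 0"
  shows "Pi_mat m d a = row_embedding m d * PiR_mat m d a"
proof (rule eq_matI)
  fix x p assume "x < dim_row (row_embedding m d * PiR_mat m d a)"
    and "p < dim_col (row_embedding m d * PiR_mat m d a)"
  then have x: "x < m * d" and p: "p < m choose 2"
    by (simp_all add: row_embedding_def PiR_mat_def)
  obtain i j where ij: "pairs_list m ! p = (i, j)"
    by force
  have "x div d < m"
    using x assms by (simp add: less_mult_imp_div_less)
  then show "Pi_mat m d a $$ (x, p) = (row_embedding m d * PiR_mat m d a) $$ (x, p)"
    using x p assms ij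
    by (auto simp: row_embedding_mult_index[where nc = "m choose 2"] PiR_mat_def Pi_mat_def)
qed (simp_all add: row_embedding_def Pi_mat_def PiR_mat_def)

lemma row_embedding_conj_index:
  assumes d: "d > 0" and X: "X \<in> carrier_mat m m" and x: "x < m * d" and y: "y < m * d"
  shows "(row_embedding m d * X * transpose_mat (row_embedding m d)) $$ (x, y)
      = (if d dvd x \<and> d dvd y then X $$ (x div d, y div d) else 0)"
proof -
  have EX: "row_embedding m d * X \<in> carrier_mat (m * d) m"
    by (rule mult_carrier_mat[OF row_embedding_carrier X])
  have "y div d < m"
    using d y by (simp add: less_mult_imp_div_less)
  then show ?thesis
    unfolding mult_transpose_row_embedding_index[OF d EX x y]
    using row_embedding_mult_index[OF d X x] by simp
qed

section \<open>Inverting the circulants\<close>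

locale circulant_schur =
  fixes m d :: nat and a c q :: real
  assumes m_ge_2: "m \<ge> 2" and d_pos: "d > 0" and a_pos: "a > 0" and c_pos: "c > 0"
    and q_def: "q = a * real d / (2 * c) + 1"
begin

abbreviation "J \<equiv> circulant m (\<lambda>_. 1)"

definition "W = circulant m (\<lambda>t. cheb_wave m q t / (2 * (cheb_T m q - 1)))"

definition "GR_row_sum = (\<Sum>t\<in>{0..<int m}. - (real d / (2 * c * real m)) * of_int (t * (int m - t)))"

lemma m_pos: "m > 0"
  using m_ge_2 by simp

lemma two_q_minus_2: "2 * q - 2 = a * real d / c"
  using c_pos by (simp add: q_def field_simps)

lemma two_q_minus_2_pos: "2 * q - 2 > 0"
  using a_pos c_pos d_pos by (simp add: two_q_minus_2)

lemma cheb_T_q_gt_1: "cheb_T m q > 1"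
  using cheb_T_gt_1[of q m] m_ge_2 a_pos c_pos d_pos by (simp add: q_def)

lemma W_carrier [simp]: "W \<in> carrier_mat m m"
  by (simp add: W_def)

lemma laplacian_mult_W: "cyclic_laplacian m (2 * q) * W = 1\<^sub>m m"
  unfolding W_def cyclic_laplacian_mult_circulant one_mat_eq_circulant
proof (rule circulant_cong)
  fix t assume t: "0 \<le> t" "t < int m"
  have "2 * q * (cheb_wave m q t / (2 * (cheb_T m q - 1)))
      - cheb_wave m q ((t - 1) mod int m) / (2 * (cheb_T m q - 1))
      - cheb_wave m q ((t + 1) mod int m) / (2 * (cheb_T m q - 1))
      = (2 * q * cheb_wave m q t - cheb_wave m q ((t - 1) mod int m)
          - cheb_wave m q ((t + 1) mod int m)) / (2 * (cheb_T m q - 1))"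
    by (simp add: diff_divide_distrib)
  also have "\<dots> = of_bool (t = 0)"
    using cheb_wave_cyclic_second_diff[OF m_ge_2 t] cheb_T_q_gt_1 by simp
  finally show "2 * q * (cheb_wave m q t / (2 * (cheb_T m q - 1)))
      - cheb_wave m q ((t - 1) mod int m) / (2 * (cheb_T m q - 1))
      - cheb_wave m q ((t + 1) mod int m) / (2 * (cheb_T m q - 1)) = of_bool (t = 0)" .
qed

lemma ones_mult_W: "J * W = (1 / (2 * q - 2)) \<cdot>\<^sub>m J"
  and W_mult_ones: "W * J = (1 / (2 * q - 2)) \<cdot>\<^sub>m J"
proof -
  define \<sigma> where "\<sigma> = (\<Sum>t\<in>{0..<int m}. cheb_wave m q t / (2 * (cheb_T m q - 1)))"
  have JW: "J * W = \<sigma> \<cdot>\<^sub>m J" and WJ: "W * J = \<sigma> \<cdot>\<^sub>m J"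
    by (simp_all add: W_def \<sigma>_def ones_mult_circulant circulant_mult_ones)
  have "J = J * (cyclic_laplacian m (2 * q) * W)"
    by (simp add: laplacian_mult_W)
  also have "\<dots> = (J * cyclic_laplacian m (2 * q)) * W"
    by (simp add: assoc_mult_mat[of J m m _ m W m])
  also have "\<dots> = ((2 * q - 2) \<cdot>\<^sub>m J) * W"
    using m_pos by (simp add: ones_mult_cyclic_laplacian)
  also have "\<dots> = (2 * q - 2) \<cdot>\<^sub>m (J * W)"
    by (rule mult_smult_assoc_mat[of J m m W m]) simp_all
  also have "\<dots> = ((2 * q - 2) * \<sigma>) \<cdot>\<^sub>m J"
    by (simp add: JW smult_circulant)
  finally have "J $$ (0, 0) = (((2 * q - 2) * \<sigma>) \<cdot>\<^sub>m J) $$ (0, 0)"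
    by simp
  then have "\<sigma> = 1 / (2 * q - 2)"
    using m_pos two_q_minus_2_pos by (simp add: field_simps)
  then show "J * W = (1 / (2 * q - 2)) \<cdot>\<^sub>m J" and "W * J = (1 / (2 * q - 2)) \<cdot>\<^sub>m J"
    using JW WJ by simp_all
qed

lemma laplacian_mult_GR_mat:
  "cyclic_laplacian m 2 * GR_mat m d c = (real d / c) \<cdot>\<^sub>m (1\<^sub>m m - (1 / real m) \<cdot>\<^sub>m J)"
  unfolding GR_mat_eq_circulant cyclic_laplacian_mult_circulant circulant_lin_comb
proof (rule circulant_cong)
  fix t assume t: "0 \<le> t" "t < int m"
  let ?\<kappa> = "- (real d / (2 * c * real m))"
  have lin: "2 * (k * x) - k * y - k * z = k * (2 * x - y - z)" for k x y z :: real
    by (simp add: algebra_simps)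
  have "2 * (?\<kappa> * of_int (t * (int m - t))) - ?\<kappa> * of_int ((t - 1) mod int m * (int m - (t - 1) mod int m))
      - ?\<kappa> * of_int ((t + 1) mod int m * (int m - (t + 1) mod int m))
      = ?\<kappa> * of_int (2 * (t * (int m - t)) - (t - 1) mod int m * (int m - (t - 1) mod int m)
          - (t + 1) mod int m * (int m - (t + 1) mod int m))"
    unfolding lin by simp
  also have "\<dots> = real d / c * (of_bool (t = 0) - 1 / real m)"
    unfolding parabola_cyclic_second_diff[OF t] using m_pos c_pos by (simp add: field_simps)
  finally show "2 * (?\<kappa> * of_int (t * (int m - t))) - ?\<kappa> * of_int ((t - 1) mod int m * (int m - (t - 1) mod int m))
      - ?\<kappa> * of_int ((t + 1) mod int m * (int m - (t + 1) mod int m))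
      = real d / c * (of_bool (t = 0) - 1 / real m * 1)"
    by simp
qed

lemma ones_mult_GR_mat: "J * GR_mat m d c = GR_row_sum \<cdot>\<^sub>m J"
  unfolding GR_mat_eq_circulant GR_row_sum_def by (rule ones_mult_circulant)

lemma GR_row_sum_neg: "GR_row_sum < 0"
proof -
  have GR_row_sum_eq:
    "GR_row_sum = - (real d / (2 * c * real m)) * (\<Sum>t\<in>{0..<int m}. real_of_int (t * (int m - t)))"
    by (simp add: GR_row_sum_def sum_distrib_left)
  have "(2::real) \<le> real m"
    using m_ge_2 by simp
  then have "0 < real_of_int (1 * (int m - 1))"
    by simp
  also have "\<dots> \<le> (\<Sum>t\<in>{0..<int m}. real_of_int (t * (int m - t)))"
    using m_ge_2 by (intro member_le_sum[of 1]) auto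
  finally show ?thesis
    unfolding GR_row_sum_eq using d_pos c_pos m_pos by (intro mult_neg_pos) simp_all
qed

definition "GR_inv = (c / real d) \<cdot>\<^sub>m cyclic_laplacian m 2 + (1 / (real m * GR_row_sum)) \<cdot>\<^sub>m J"

lemma GR_inv_carrier [simp]: "GR_inv \<in> carrier_mat m m"
  by (simp add: GR_inv_def)

lemma GR_inv_mult_GR_mat: "GR_inv * GR_mat m d c = 1\<^sub>m m"
proof -
  have "GR_inv * GR_mat m d c = (c / real d) \<cdot>\<^sub>m (cyclic_laplacian m 2 * GR_mat m d c)
      + (1 / (real m * GR_row_sum)) \<cdot>\<^sub>m (J * GR_mat m d c)"
    unfolding GR_inv_def
    by (simp add: add_mult_distrib_mat[of _ m m _ _ m] mult_smult_assoc_mat[of _ m m "GR_mat m d c" m])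
  also have "\<dots> = 1\<^sub>m m"
    unfolding laplacian_mult_GR_mat ones_mult_GR_mat circulant_lin_comb
    using d_pos c_pos m_pos GR_row_sum_neg by (intro circulant_cong) (simp add: field_simps)
  finally show ?thesis .
qed

lemma minv_GR_mat: "minv (GR_mat m d c) = GR_inv"
  by (rule minv_eqI[OF GR_mat_carrier GR_inv_carrier GR_inv_mult_GR_mat])

definition "\<beta> = 1 / (real m * GR_row_sum) - a / real m"

text \<open>gamma is forced by K_mult_M_R but drops out of the result: Gram_R annihilates J.\<close>

definition "\<gamma> = - \<beta> * GR_row_sum / a"

definition "M_R = (real d / c) \<cdot>\<^sub>m W + \<gamma> \<cdot>\<^sub>m J"

lemma M_R_carrier [simp]: "M_R \<in> carrier_mat m m"
  by (simp add: M_R_def)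

abbreviation "Gram_R \<equiv> a \<cdot>\<^sub>m 1\<^sub>m m + (- a / real m) \<cdot>\<^sub>m J"

abbreviation "K \<equiv> (c / real d) \<cdot>\<^sub>m cyclic_laplacian m (2 * q) + \<beta> \<cdot>\<^sub>m J"

lemma PiR_gram: "PiR_mat m d a * transpose_mat (PiR_mat m d a) = Gram_R"
  by (rule PiR_mult_transpose[OF d_pos less_imp_le[OF a_pos]])

lemma K_eq: "minv (GR_mat m d c) + PiR_mat m d a * transpose_mat (PiR_mat m d a) = K"
  unfolding minv_GR_mat GR_inv_def PiR_gram \<beta>_def cyclic_laplacian_def circulant_lin_comb
  using d_pos c_pos by (intro circulant_cong) (simp add: q_def field_simps)

lemma K_mult_M_R: "K * M_R = 1\<^sub>m m"
proof -
  let ?L = "cyclic_laplacian m (2 * q)"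
  have "K * M_R
      = (c / real d * (real d / c)) \<cdot>\<^sub>m (?L * W) + (c / real d * \<gamma>) \<cdot>\<^sub>m (?L * J)
        + (\<beta> * (real d / c)) \<cdot>\<^sub>m (J * W) + (\<beta> * \<gamma>) \<cdot>\<^sub>m (J * J)"
    unfolding M_R_def by (rule lin_comb_mult_lin_comb[where n = m]) simp_all
  also have "\<dots> = 1\<^sub>m m"
    unfolding laplacian_mult_W cyclic_laplacian_mult_ones[OF m_pos] ones_mult_W ones_mult_ones
      two_q_minus_2 circulant_lin_comb
    using d_pos c_pos a_pos m_pos GR_row_sum_neg
    by (intro circulant_cong) (simp add: \<beta>_def \<gamma>_def field_simps)
  finally show ?thesis .
qed

lemma MR_mat_eq: "MR_mat m d a c = M_R"
  unfolding MR_mat_def K_eq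
  by (rule minv_eqI[OF _ M_R_carrier mat_mult_left_right_inverse[OF _ M_R_carrier K_mult_M_R]])
     simp_all

lemma Gram_R_mult_M_R: "Gram_R * M_R = (a * real d / c) \<cdot>\<^sub>m W + (- 1 / real m) \<cdot>\<^sub>m J"
proof -
  have "Gram_R * M_R
      = (a * (real d / c)) \<cdot>\<^sub>m (1\<^sub>m m * W) + (a * \<gamma>) \<cdot>\<^sub>m (1\<^sub>m m * J)
        + (- a / real m * (real d / c)) \<cdot>\<^sub>m (J * W) + (- a / real m * \<gamma>) \<cdot>\<^sub>m (J * J)"
    unfolding M_R_def by (rule lin_comb_mult_lin_comb[where n = m]) simp_all
  also have "\<dots> = (a * real d / c) \<cdot>\<^sub>m W + (- 1 / real m) \<cdot>\<^sub>m J"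
    unfolding left_mult_one_mat[OF W_carrier] left_mult_one_mat[OF circulant_carrier] ones_mult_W
      ones_mult_ones two_q_minus_2
    unfolding W_def circulant_lin_comb
    using d_pos c_pos a_pos m_pos
    by (intro circulant_cong) (simp add: field_simps)
  finally show ?thesis .
qed

definition "F_symbol t = a * of_bool (t = 0) - a\<^sup>2 * real d / (2 * c) * cheb_wave m q t / (cheb_T m q - 1)"

lemma reduced_schur_complement: "Gram_R - Gram_R * M_R * Gram_R = circulant m F_symbol"
proof -
  have "Gram_R * M_R * Gram_R = ((a * real d / c) \<cdot>\<^sub>m W + (- 1 / real m) \<cdot>\<^sub>m J) * Gram_R"
    by (simp only: Gram_R_mult_M_R)
  also have "\<dots> = (a * real d / c * a) \<cdot>\<^sub>m (W * 1\<^sub>m m) + (a * real d / c * (- a / real m)) \<cdot>\<^sub>m (W * J)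
        + (- 1 / real m * a) \<cdot>\<^sub>m (J * 1\<^sub>m m) + (- 1 / real m * (- a / real m)) \<cdot>\<^sub>m (J * J)"
    by (rule lin_comb_mult_lin_comb[where n = m]) simp_all
  also have "\<dots> = circulant m (\<lambda>t. a\<^sup>2 * real d / c * (cheb_wave m q t / (2 * (cheb_T m q - 1))) - a / real m)"
    unfolding right_mult_one_mat[OF W_carrier] right_mult_one_mat[OF circulant_carrier]
      W_mult_ones ones_mult_ones two_q_minus_2
    unfolding W_def circulant_lin_comb
    using d_pos c_pos a_pos m_pos cheb_T_q_gt_1
    by (intro circulant_cong) (simp add: power2_eq_square field_simps)
  finally have GMG: "Gram_R * M_R * Gram_R
      = circulant m (\<lambda>t. a\<^sup>2 * real d / c * (cheb_wave m q t / (2 * (cheb_T m q - 1))) - a / real m)" .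
  show ?thesis
    unfolding GMG unfolding F_symbol_def circulant_lin_comb using cheb_T_q_gt_1 c_pos
    by (intro circulant_cong) (simp add: field_simps)
qed

lemma F_mat_eq:
  "F_mat m d a c = row_embedding m d * circulant m F_symbol * transpose_mat (row_embedding m d)"
  unfolding F_mat_def Let_def Pi_mat_eq_row_embedding_mult[OF d_pos] MR_mat_eq
    mult_transpose_sandwich[OF row_embedding_carrier PiR_mat_carrier M_R_carrier]
    PiR_gram reduced_schur_complement ..

lemma F_mat_index:
  assumes "x < m * d" and "y < m * d"
  shows "F_mat m d a c $$ (x, y)
      = (if d dvd x \<and> d dvd y then F_symbol ((int (y div d) - int (x div d)) mod int m) else 0)"
proof -
  have "x div d < m" "y div d < m"
    using assms d_pos by (simp_all add: less_mult_imp_div_less)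
  then show ?thesis
    unfolding F_mat_eq using row_embedding_conj_index[OF d_pos circulant_carrier assms] by simp
qed

lemma F_mat_carrier: "F_mat m d a c \<in> carrier_mat (m * d) (m * d)"
  unfolding F_mat_eq carrier_mat_def by (simp add: row_embedding_def)

end

theorem lemma4p3:
  fixes m d :: nat and a c q :: real and f :: "nat \<Rightarrow> real"
  assumes "m \<ge> 2" and "d \<ge> 1" and "a > 0" and "c > 0"
    and "q = a * real d / (2 * c) + 1"
    and "\<And>i. f i = (if i = 1 then a else 0)
             - a\<^sup>2 * real d / (2 * c) *
               (cheb_U_int (int i - 2) q + cheb_U_int (int m - int i) q) / (cheb_T m q - 1)"
  shows "F_mat m d a c \<in> carrier_mat (m * d) (m * d)
    \<and> (\<forall>r \<in> {1..m}. \<forall>s \<in> {1..m}.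
          F_mat m d a c $$ ((r - 1) * d, (s - 1) * d)
            = f (nat ((int s - int r) mod int m) + 1))
    \<and> (\<forall>i < m * d. \<forall>j < m * d. \<not> (d dvd i \<and> d dvd j) \<longrightarrow> F_mat m d a c $$ (i, j) = 0)"
proof -
  interpret circulant_schur m d a c q
    using assms by unfold_locales auto
  have "F_mat m d a c $$ ((r - 1) * d, (s - 1) * d) = f (nat ((int s - int r) mod int m) + 1)"
    if "r \<in> {1..m}" "s \<in> {1..m}" for r s
  proof -
    define t where "t = (int s - int r) mod int m"
    have "0 \<le> t"
      using m_pos by (simp add: t_def)
    have "r - 1 < m" "s - 1 < m"
      using that by auto
    then have "F_mat m d a c $$ ((r - 1) * d, (s - 1) * d) = F_symbol t"
      using that d_pos by (simp add: F_mat_index t_def of_nat_diff)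
    also have "\<dots> = f (nat t + 1)"
      using \<open>0 \<le> t\<close> by (simp add: F_symbol_def assms(6) cheb_wave_def algebra_simps)
    finally show ?thesis
      unfolding t_def .
  qed
  then show ?thesis
    using F_mat_carrier F_mat_index by simp
qed

end
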